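(* Let $C\in\mathcal{P}(n,d)$ with $\mathrm{st}(C)=\{j_1<\cdots<j_\ell\}$. Then $\ell\le d\le n-\ell$ and $j_k\ge 2k$ for all $1\le k\le\ell$.
   Context: $\mathcal{P}(n,d)$ is the set of words $C=C_1\cdots C_n$ in letters $\mathbf{e}$ (east step) and $\mathbf{n}$ (north step) with exactly $d$ letters $\mathbf{e}$. Scan positions left to right and mark position $i$ with $C_i=\mathbf{e}$ if the number of $j<i$ with $C_j=\mathbf{n}$ equals the number of $j<i$ with $C_j=\mathbf{e}$ that are unmarked; $\mathrm{st}(C)$ is the set of unmarked positions $i$ with $C_i=\mathbf{e}$. *)

theory Defs
  imports Main
begin

datatype step = E | N   (* E = east step, N = north step *)

text \<open>Scanning left to right; a = number of N letters seen so far,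
  b = number of unmarked E letters seen so far.\<close>
fun marks_aux :: "nat \<Rightarrow> nat \<Rightarrow> step list \<Rightarrow> bool list" where
  "marks_aux a b [] = []"
| "marks_aux a b (N # w) = False # marks_aux (Suc a) b w"
| "marks_aux a b (E # w) =
     (if a = b then True # marks_aux a b w else False # marks_aux a (Suc b) w)"

definition marks :: "step list \<Rightarrow> bool list" where
  "marks C = marks_aux 0 0 C"

definition P :: "nat \<Rightarrow> nat \<Rightarrow> step list set" where
  "P n d = {C. length C = n \<and> length (filter (\<lambda>x. x = E) C) = d}"

text \<open>Positions are 1-indexed: position i corresponds to C ! (i - 1).\<close>
definition st :: "step list \<Rightarrow> nat set" where
  "st C = {i. 1 \<le> i \<and> i \<le> length C \<and> C ! (i - 1) = E \<and> \<not> marks C ! (i - 1)}"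

end

theory Submission
  imports Defs
begin

text \<open>While scanning C, let a be the number of N letters and b the number of unmarked E
  letters read so far. Initially a = b = 0, and an E stays unmarked only if a \<noteq> b, so
  b \<le> a is invariant: no word has more unmarked E letters than N letters. Unmarked E
  letters are in particular E letters, so twice their number is at most the length of the
  word. Since marking only looks at the past, the positions of st C that are at most j
  form st of the prefix of length j; applied to the prefix ending at the k-th element of
  st C, this shows that this element is at least 2k.\<close>

definition unmarked_E :: "step list \<Rightarrow> bool list \<Rightarrow> nat" where
  "unmarked_E w ms = length (filter (\<lambda>(x, m). x = E \<and> \<not> m) (zip w ms))"

lemma unmarked_E_le_count_E: "unmarked_E w ms \<le> length (filter (\<lambda>x. x = E) w)"
proof (induction w arbitrary: ms)
  case (Cons x w)
  then show ?case by (cases ms) (auto simp: unmarked_E_def le_SucI)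
qed (simp add: unmarked_E_def)

lemma unmarked_E_marks_aux_le:
  "b \<le> a \<Longrightarrow> b + unmarked_E w (marks_aux a b w) \<le> a + length (filter (\<lambda>x. x = N) w)"
  by (induction a b w rule: marks_aux.induct) (fastforce simp: unmarked_E_def)+

lemma length_marks_aux [simp]: "length (marks_aux a b w) = length w"
  by (induction a b w rule: marks_aux.induct) auto

lemma take_marks_aux: "take j (marks_aux a b w) = marks_aux a b (take j w)"
  by (induction a b w arbitrary: j rule: marks_aux.induct) (auto simp: take_Cons')

lemma count_E_plus_count_N: "length (filter (\<lambda>x. x = E) w) + length (filter (\<lambda>x. x = N) w) = length w"
proof (induction w)
  case (Cons x w)
  then show ?case by (cases x) auto
qed simp

lemma st_eq_image_Suc: "st C = Suc ` {i. i < length C \<and> C ! i = E \<and> \<not> marks C ! i}"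
  unfolding st_def by (force simp: image_iff Suc_le_eq intro: exI[of _ "_ - 1"])

lemma card_st: "card (st C) = unmarked_E C (marks C)"
proof -
  have "card (st C) = card {i. i < length C \<and> C ! i = E \<and> \<not> marks C ! i}"
    by (simp add: st_eq_image_Suc card_image)
  also have "\<dots> = unmarked_E C (marks C)"
    unfolding unmarked_E_def length_filter_conv_card
    by (intro arg_cong[where f = card] Collect_cong) (auto simp: marks_def)
  finally show ?thesis .
qed

lemma card_st_le_count_E: "card (st C) \<le> length (filter (\<lambda>x. x = E) C)"
  by (simp add: card_st unmarked_E_le_count_E)

lemma card_st_le_count_N: "card (st C) \<le> length (filter (\<lambda>x. x = N) C)"
  using unmarked_E_marks_aux_le[of 0 0 C] by (simp add: card_st marks_def)

lemma two_card_st_le_length: "2 * card (st C) \<le> length C"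
  using card_st_le_count_E[of C] card_st_le_count_N[of C] count_E_plus_count_N[of C] by linarith

lemma st_take: "st (take j C) = {i \<in> st C. i \<le> j}"
  by (auto simp: st_def marks_def take_marks_aux[symmetric])

lemma two_card_st_prefix_le: "j \<le> length C \<Longrightarrow> 2 * card {i \<in> st C. i \<le> j} \<le> j"
  using two_card_st_le_length[of "take j C"] by (simp add: st_take)

lemma Suc_le_card_le_sorted_list_of_set_nth:
  fixes S :: "'a::linorder set"
  assumes "finite S" and "k < card S"
  shows "Suc k \<le> card {x \<in> S. x \<le> sorted_list_of_set S ! k}"
proof -
  define s where "s = sorted_list_of_set S"
  have s: "sorted s" "distinct s" "set s = S" and k: "k < length s"
    using assms by (simp_all add: s_def)
  have "set (take (Suc k) s) \<subseteq> {x \<in> S. x \<le> s ! k}"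
  proof
    fix x assume "x \<in> set (take (Suc k) s)"
    then obtain i where i: "i \<le> k" "x = s ! i"
      using k by (auto simp: in_set_conv_nth less_Suc_eq_le)
    then have "x \<in> S"
      using k s(3) nth_mem[of i s] by simp
    moreover have "x \<le> s ! k"
      using i k s(1) by (simp add: sorted_nth_mono)
    ultimately show "x \<in> {x \<in> S. x \<le> s ! k}"
      by simp
  qed
  then have "card (set (take (Suc k) s)) \<le> card {x \<in> S. x \<le> s ! k}"
    using assms(1) by (intro card_mono) simp_all
  moreover have "card (set (take (Suc k) s)) = Suc k"
    using k s(2) by (simp add: distinct_card)
  ultimately show ?thesis
    unfolding s_def by simp
qed

theorem lemma4p12:
  fixes C :: "step list" and n d :: nat
  assumes "C \<in> P n d"
  shows "card (st C) \<le> d \<and> d \<le> n - card (st C) \<and>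
         (\<forall>k. 1 \<le> k \<and> k \<le> card (st C) \<longrightarrow>
              2 * k \<le> sorted_list_of_set (st C) ! (k - 1))"
proof -
  have n: "length C = n" and d: "length (filter (\<lambda>x. x = E) C) = d"
    using assms by (auto simp: P_def)
  have fin: "finite (st C)"
    unfolding st_def by simp
  have "2 * k \<le> sorted_list_of_set (st C) ! (k - 1)" if "1 \<le> k" "k \<le> card (st C)" for k
  proof -
    define j where "j = sorted_list_of_set (st C) ! (k - 1)"
    have "j \<in> st C"
      unfolding j_def using fin that
      by (metis Suc_le_eq Suc_pred' length_sorted_list_of_set nth_mem set_sorted_list_of_set zero_less_one order_less_le_trans)
    then have "j \<le> length C"
      by (simp add: st_def)
    moreover have "k \<le> card {i \<in> st C. i \<le> j}"
      using Suc_le_card_le_sorted_list_of_set_nth[OF fin, of "k - 1"] that by (simp add: j_def)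
    ultimately have "2 * k \<le> j"
      using two_card_st_prefix_le[of j C] by linarith
    then show ?thesis
      by (simp add: j_def)
  qed
  moreover have "card (st C) \<le> d" and "d + card (st C) \<le> n"
    using card_st_le_count_E[of C] card_st_le_count_N[of C] count_E_plus_count_N[of C] n d
    by linarith+
  ultimately show ?thesis
    by auto
qed

end
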